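(* Let $(X_n)_{n\in\mathbb N}$ be a stationary process which is $\Theta,r$-multiple mixing with respect to $\mathcal G$, and let $p\in\mathbb N^*$ satisfy $\sum_{i=0}^\infty i^{p-1}\Theta(i)<\infty$. Then there is a constant $K_p<\infty$ such that $$I_n(p)\le K_p\sum_{i=1}^{\lceil p/2\rceil}n^{i-1}\|f(X_0)\|_r^i\|f\|_{\mathcal G}^i$$ for all $n\in\mathbb N^*$ and all $f\in\mathcal G$ with $\|f\|_\infty\le1$ and ${\rm E}f(X_0)=0$.
   Context: For integers $i_1,\dots,i_j$ write $i_j^*=i_1+\dots+i_j$. For fixed $f$ and $p\in\mathbb N^*$, $I_n(p)=\sum_{0\le i_1,\dots,i_p\le n-1,\ i_p^*\le n-1}\big|{\rm E}\big(f(X_0)f(X_{i_1^*})\cdots f(X_{i_p^*})\big)\big|$. $\mathcal G$ is a class of measurable real functions on $\mathbb R^d$ with a seminorm $\|\cdot\|_{\mathcal G}$; $\|\cdot\|_r$ is the $L^r$ norm. Multiple mixing: $(X_i)$ is $\Theta,r$-multiple mixing with respect to $\mathcal G$ if $r\in[1,\infty)$, $\Theta:\mathbb N\to\mathbb R_0^+$ is nonincreasing, and for every $p\in\mathbb N^*$ there is $K_p<\infty$ such that $\big|{\rm Cov}\big(f(X_0)f(X_{i_1^*})\cdots f(X_{i_{q-1}^*}),\,f(X_{i_q^*})\cdots f(X_{i_p^*})\big)\big|\le K_p\|f(X_0)\|_r\|f\|_{\mathcal G}\Theta(i_q)$ for all $f\in\mathcal G$ with $\|f\|_\infty\le1$ and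 ${\rm E}f(X_0)=0$, all $i_1,\dots,i_p\in\mathbb N$, $q\in\{1,\dots,p\}$. *)

theory Defs
  imports "HOL-Probability.Probability"
begin

definition istar :: "(nat \<Rightarrow> nat) \<Rightarrow> nat \<Rightarrow> nat" where
  "istar i j = (\<Sum>k\<in>{1..j}. i k)"

definition Lr_norm :: "'w measure \<Rightarrow> real \<Rightarrow> ('w \<Rightarrow> real) \<Rightarrow> real" where
  "Lr_norm M r Y = (\<integral>\<omega>. \<bar>Y \<omega>\<bar> powr r \<partial>M) powr (1 / r)"

definition cov :: "'w measure \<Rightarrow> ('w \<Rightarrow> real) \<Rightarrow> ('w \<Rightarrow> real) \<Rightarrow> real" where
  "cov M A B = (\<integral>\<omega>. A \<omega> * B \<omega> \<partial>M) - (\<integral>\<omega>. A \<omega> \<partial>M) * (\<integral>\<omega>. B \<omega> \<partial>M)"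

definition stationary :: "'w measure \<Rightarrow> (nat \<Rightarrow> 'w \<Rightarrow> 'e::euclidean_space) \<Rightarrow> bool" where
  "stationary M X \<longleftrightarrow> (\<forall>m k.
     distr M (PiM {..m} (\<lambda>_. borel)) (\<lambda>\<omega>. \<lambda>i\<in>{..m}. X (k + i) \<omega>) =
     distr M (PiM {..m} (\<lambda>_. borel)) (\<lambda>\<omega>. \<lambda>i\<in>{..m}. X i \<omega>))"

definition admissible :: "'w measure \<Rightarrow> (nat \<Rightarrow> 'w \<Rightarrow> 'e) \<Rightarrow> ('e \<Rightarrow> real) set \<Rightarrow> ('e \<Rightarrow> real) \<Rightarrow> bool" where
  "admissible M X G f \<longleftrightarrow> f \<in> G \<and> (\<forall>x. \<bar>f x\<bar> \<le> 1) \<and> (\<integral>\<omega>. f (X 0 \<omega>) \<partial>M) = 0"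

definition multiple_mixing ::
  "'w measure \<Rightarrow> (nat \<Rightarrow> 'w \<Rightarrow> 'e) \<Rightarrow> ('e \<Rightarrow> real) set \<Rightarrow> (('e \<Rightarrow> real) \<Rightarrow> real)
    \<Rightarrow> (nat \<Rightarrow> real) \<Rightarrow> real \<Rightarrow> bool" where
  "multiple_mixing M X G normG \<Theta> r \<longleftrightarrow>
     1 \<le> r \<and> (\<forall>k. 0 \<le> \<Theta> k) \<and> antimono \<Theta> \<and>
     (\<forall>p\<ge>1. \<exists>K::real. \<forall>f i q. admissible M X G f \<longrightarrow> q \<in> {1..p} \<longrightarrow>
        \<bar>cov M (\<lambda>\<omega>. \<Prod>j\<in>{0..<q}. f (X (istar i j) \<omega>))
               (\<lambda>\<omega>. \<Prod>j\<in>{q..p}. f (X (istar i j) \<omega>))\<bar>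
        \<le> K * Lr_norm M r (\<lambda>\<omega>. f (X 0 \<omega>)) * normG f * \<Theta> (i q))"

definition I_sum :: "'w measure \<Rightarrow> (nat \<Rightarrow> 'w \<Rightarrow> 'e) \<Rightarrow> ('e \<Rightarrow> real) \<Rightarrow> nat \<Rightarrow> nat \<Rightarrow> real" where
  "I_sum M X f n p =
     (\<Sum>i\<in>{i \<in> PiE {1..p} (\<lambda>_. {..<n}). istar i p \<le> n - 1}.
        \<bar>\<integral>\<omega>. (\<Prod>j\<in>{0..p}. f (X (istar i j) \<omega>)) \<partial>M\<bar>)"

end

theory Submission
  imports Defs
begin

(* Write P_a(c,n) = \<Sum>_{k=1}^{\<lceil>a/2\<rceil>} n^(k-1) c^k with c = \<parallel>f(X_0)\<parallel>_r \<parallel>f\<parallel>_G, and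
   s_j = i_1 + ... + i_j.  Instead of I_n(p) we bound the larger sum B_a(n) of
   |E f(X_0) f(X_(s_1)) ... f(X_(s_a))| over the whole cube (i_1,...,i_a) \<in> {0..n-1}^a,
   by strong induction on a \<le> p.  For a fixed tuple choose q with
   i_q maximal and split the product into the first q and the last a-q+1 factors.  Then
   E(AB) = Cov(A,B) + E A E B; the mixing hypothesis bounds the covariance by K c \<Theta>(max i), and
   by stationarity E A and E B are the moments of the prefix and (shifted) suffix tuples.
   Summing over the cube, \<Sum>_i \<Theta>(max i) \<le> a \<Sum>_m (m+1)^(a-1) \<Theta>(m), finite by the summability
   hypothesis, while the product terms factorise as n B_(q-1)(n) B_(a-q)(n).  This gives the
   quadratic recursion B_a \<le> D_a c + \<Sum>_q n B_(q-1) B_(a-q), and an elementary induction turns it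
   into B_a \<le> K_a P_a(c,n), since n P_b P_d \<le> const P_(b+d+1) whenever b+d+1 = a. *)

definition tuple_prefix :: "nat \<Rightarrow> (nat \<Rightarrow> 'a) \<Rightarrow> (nat \<Rightarrow> 'a)" where
  "tuple_prefix q i = restrict i {1..q-1}"

definition tuple_suffix :: "nat \<Rightarrow> nat \<Rightarrow> (nat \<Rightarrow> 'a) \<Rightarrow> (nat \<Rightarrow> 'a)" where
  "tuple_suffix a q i = (\<lambda>k\<in>{1..a-q}. i (q + k))"

lemma bij_betw_PiE_split:
  assumes q: "1 \<le> q" "q \<le> a"
  shows "bij_betw (\<lambda>i. (tuple_prefix q i, i q, tuple_suffix a q i)) (PiE {1..a} (\<lambda>_. N))
           (PiE {1..q-1} (\<lambda>_. N) \<times> N \<times> PiE {1..a-q} (\<lambda>_. N))"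
proof -
  define join :: "(nat \<Rightarrow> 'a) \<times> 'a \<times> (nat \<Rightarrow> 'a) \<Rightarrow> nat \<Rightarrow> 'a" where
    "join = (\<lambda>(u, x, v) k. if k \<in> {1..q-1} then u k else if k = q then x
                           else if k \<in> {q+1..a} then v (k - q) else undefined)"
  show ?thesis
  proof (rule bij_betw_byWitness[where f' = join])
    show "\<forall>i\<in>PiE {1..a} (\<lambda>_. N). join (tuple_prefix q i, i q, tuple_suffix a q i) = i"
    proof (intro ballI ext)
      fix i k assume "i \<in> PiE {1..a} (\<lambda>_. N)"
      then show "join (tuple_prefix q i, i q, tuple_suffix a q i) k = i k"
        using PiE_arb[of i _ _ k] q by (auto simp: join_def tuple_prefix_def tuple_suffix_def)
    qed
    show "\<forall>z\<in>PiE {1..q-1} (\<lambda>_. N) \<times> N \<times> PiE {1..a-q} (\<lambda>_. N).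
        (\<lambda>i. (tuple_prefix q i, i q, tuple_suffix a q i)) (join z) = z"
    proof
      fix z assume "z \<in> PiE {1..q-1} (\<lambda>_. N) \<times> N \<times> PiE {1..a-q} (\<lambda>_. N)"
      then obtain u x v where z: "z = (u, x, v)"
        and u: "u \<in> PiE {1..q-1} (\<lambda>_. N)" and v: "v \<in> PiE {1..a-q} (\<lambda>_. N)" by auto
      have "tuple_prefix q (join (u, x, v)) = u"
        using PiE_arb[OF u] by (auto simp: join_def tuple_prefix_def)
      moreover have "tuple_suffix a q (join (u, x, v)) = v"
        using PiE_arb[OF v] q by (auto simp: join_def tuple_suffix_def)
      moreover have "join (u, x, v) q = x" using q by (auto simp: join_def)
      ultimately show "(\<lambda>i. (tuple_prefix q i, i q, tuple_suffix a q i)) (join z) = z"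
        by (simp add: z)
    qed
    show "(\<lambda>i. (tuple_prefix q i, i q, tuple_suffix a q i)) ` PiE {1..a} (\<lambda>_. N)
        \<subseteq> PiE {1..q-1} (\<lambda>_. N) \<times> N \<times> PiE {1..a-q} (\<lambda>_. N)"
      using q by (auto simp: tuple_prefix_def tuple_suffix_def PiE_iff)
    show "join ` (PiE {1..q-1} (\<lambda>_. N) \<times> N \<times> PiE {1..a-q} (\<lambda>_. N)) \<subseteq> PiE {1..a} (\<lambda>_. N)"
    proof
      fix y assume "y \<in> join ` (PiE {1..q-1} (\<lambda>_. N) \<times> N \<times> PiE {1..a-q} (\<lambda>_. N))"
      then obtain u x v where y: "y = join (u, x, v)" and u: "u \<in> PiE {1..q-1} (\<lambda>_. N)"
        and x: "x \<in> N" and v: "v \<in> PiE {1..a-q} (\<lambda>_. N)" by auto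
      have "v (k - q) \<in> N" if "k \<in> {q+1..a}" for k
        using PiE_mem[OF v, of "k - q"] that by fastforce
      with u x q show "y \<in> PiE {1..a} (\<lambda>_. N)"
        by (auto simp: y join_def PiE_iff extensional_def)
    qed
  qed
qed

lemma sum_PiE_split:
  fixes g h :: "(nat \<Rightarrow> 'b) \<Rightarrow> real"
  assumes "1 \<le> q" "q \<le> a"
  shows "(\<Sum>i\<in>PiE {1..a} (\<lambda>_. N). g (tuple_prefix q i) * h (tuple_suffix a q i))
       = real (card N) * (\<Sum>u\<in>PiE {1..q-1} (\<lambda>_. N). g u) * (\<Sum>v\<in>PiE {1..a-q} (\<lambda>_. N). h v)"
proof -
  have "(\<Sum>i\<in>PiE {1..a} (\<lambda>_. N). g (tuple_prefix q i) * h (tuple_suffix a q i))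
      = (\<Sum>z\<in>PiE {1..q-1} (\<lambda>_. N) \<times> N \<times> PiE {1..a-q} (\<lambda>_. N). g (fst z) * h (snd (snd z)))"
    using sum.reindex_bij_betw[OF bij_betw_PiE_split[OF assms, of N],
        where g = "\<lambda>z. g (fst z) * h (snd (snd z))"] by simp
  also have "\<dots> = (\<Sum>u\<in>PiE {1..q-1} (\<lambda>_. N). \<Sum>x\<in>N. \<Sum>v\<in>PiE {1..a-q} (\<lambda>_. N). g u * h v)"
    unfolding sum.cartesian_product by (simp add: case_prod_beta)
  also have "\<dots> = real (card N) * (\<Sum>u\<in>PiE {1..q-1} (\<lambda>_. N). g u) * (\<Sum>v\<in>PiE {1..a-q} (\<lambda>_. N). h v)"
    by (simp add: sum_distrib_left sum_distrib_right mult_ac)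
  finally show ?thesis .
qed

(* At most a (m+1)^(a-1) tuples in {..<n}^a have largest entry m: choose the position of a
   maximal entry, the other entries range over {..m}. *)
lemma card_PiE_max_eq:
  assumes a: "1 \<le> a"
  shows "card {i \<in> PiE {1..a} (\<lambda>_. {..<n}). Max (i ` {1..a}) = m} \<le> a * (m+1)^(a-1)"
proof -
  define P where "P = (\<lambda>q. PiE {1..a} (\<lambda>k. if k = q then {m} else {..m}))"
  have sub: "{i \<in> PiE {1..a} (\<lambda>_. {..<n}). Max (i ` {1..a}) = m} \<subseteq> (\<Union>q\<in>{1..a}. P q)"
  proof
    fix i assume "i \<in> {i \<in> PiE {1..a} (\<lambda>_. {..<n}). Max (i ` {1..a}) = m}"
    then have i: "i \<in> PiE {1..a} (\<lambda>_. {..<n})" and mx: "Max (i ` {1..a}) = m" by auto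
    have "Max (i ` {1..a}) \<in> i ` {1..a}" using a by (intro Max_in) auto
    then obtain q where q: "q \<in> {1..a}" "i q = m" using mx by auto
    have "i k \<le> m" if "k \<in> {1..a}" for k
      using mx that by (metis Max_ge finite_atLeastAtMost finite_imageI imageI)
    then have "i \<in> P q" using i q unfolding P_def by (auto simp: PiE_iff)
    then show "i \<in> (\<Union>q\<in>{1..a}. P q)" using q by auto
  qed
  have card_P: "card (P q) = (m+1)^(a-1)" if q: "q \<in> {1..a}" for q
  proof -
    have "card (P q) = (\<Prod>k\<in>{1..a}. if k = q then 1 else m+1)"
      unfolding P_def by (subst card_PiE) (auto intro: prod.cong)
    also have "\<dots> = (\<Prod>k\<in>{1..a}-{q}. m+1)"
      using q by (subst prod.remove[of _ q]) (auto intro: prod.cong)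
    also have "\<dots> = (m+1)^(a-1)" using q by simp
    finally show ?thesis .
  qed
  have "card {i \<in> PiE {1..a} (\<lambda>_. {..<n}). Max (i ` {1..a}) = m} \<le> card (\<Union>q\<in>{1..a}. P q)"
    by (rule card_mono[OF _ sub]) (auto simp: P_def intro!: finite_PiE)
  also have "\<dots> \<le> (\<Sum>q\<in>{1..a}. card (P q))" by (rule card_UN_le) auto
  also have "\<dots> = a * (m+1)^(a-1)" using card_P by simp
  finally show ?thesis .
qed

(* Grouping the tuples by their largest entry turns the mixing contribution
   \<Sum>_i \<Theta>(max i) into a weighted one-dimensional sum. *)
lemma sum_PiE_max_bound:
  fixes \<Theta> :: "nat \<Rightarrow> real"
  assumes a: "1 \<le> a" and \<Theta>0: "\<And>k. 0 \<le> \<Theta> k"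
  shows "(\<Sum>i\<in>PiE {1..a} (\<lambda>_. {..<n}). \<Theta> (Max (i ` {1..a})))
           \<le> real a * (\<Sum>m<n. (real m + 1)^(a-1) * \<Theta> m)"
proof -
  define B where "B = PiE {1..a} (\<lambda>_. {..<n})"
  define mx where "mx = (\<lambda>i::nat\<Rightarrow>nat. Max (i ` {1..a}))"
  have mx_range: "mx ` B \<subseteq> {..<n}"
  proof
    fix y assume "y \<in> mx ` B"
    then obtain i where i: "i \<in> B" and y: "y = mx i" by auto
    have "mx i \<in> i ` {1..a}" unfolding mx_def using a by (intro Max_in) auto
    then show "y \<in> {..<n}" using i y unfolding B_def by (auto simp: PiE_iff)
  qed
  have "(\<Sum>i\<in>B. \<Theta> (mx i)) = (\<Sum>m<n. \<Sum>i\<in>{i\<in>B. mx i = m}. \<Theta> (mx i))"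
    by (rule sum.group[symmetric]) (use mx_range in \<open>auto simp: B_def finite_PiE\<close>)
  also have "\<dots> = (\<Sum>m<n. real (card {i\<in>B. mx i = m}) * \<Theta> m)"
    by (intro sum.cong refl) simp
  also have "\<dots> \<le> (\<Sum>m<n. real (a * (m+1)^(a-1)) * \<Theta> m)"
    using card_PiE_max_eq[OF a] unfolding B_def mx_def
    by (intro sum_mono mult_right_mono \<Theta>0) (simp only: of_nat_le_iff)
  also have "\<dots> = real a * (\<Sum>m<n. (real m + 1)^(a-1) * \<Theta> m)"
    by (simp add: sum_distrib_left mult_ac add.commute)
  finally show ?thesis unfolding B_def mx_def .
qed

(* Summability of m^d \<Theta>(m) implies that of (m+1)^d \<Theta>(m), since m+1 \<le> 2m for m \<ge> 1. *)
lemma summable_shifted_power_weight: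
  fixes \<Theta> :: "nat \<Rightarrow> real"
  assumes \<Theta>0: "\<And>k. 0 \<le> \<Theta> k" and sum: "summable (\<lambda>m. real m ^ d * \<Theta> m)"
  shows "summable (\<lambda>m. (real m + 1) ^ d * \<Theta> m)"
proof (rule summable_comparison_test'[where N = 1])
  show "summable (\<lambda>m. 2 ^ d * (real m ^ d * \<Theta> m))" using sum by (rule summable_mult)
next
  fix m :: nat assume "1 \<le> m"
  then have "(real m + 1) ^ d \<le> (2 * real m) ^ d" by (intro power_mono) auto
  then have "(real m + 1) ^ d * \<Theta> m \<le> (2 * real m) ^ d * \<Theta> m"
    using \<Theta>0 by (rule mult_right_mono)
  then show "norm ((real m + 1) ^ d * \<Theta> m) \<le> 2 ^ d * (real m ^ d * \<Theta> m)"
    using \<Theta>0[of m] by (simp add: power_mult_distrib mult.assoc)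
qed

lemma partial_weight_le_suminf:
  fixes \<Theta> :: "nat \<Rightarrow> real"
  assumes \<Theta>0: "\<And>k. 0 \<le> \<Theta> k" and sum: "summable (\<lambda>m. (real m + 1) ^ (p - 1) * \<Theta> m)"
    and "a \<le> p"
  shows "(\<Sum>m<n. (real m + 1) ^ (a - 1) * \<Theta> m) \<le> (\<Sum>m. (real m + 1) ^ (p - 1) * \<Theta> m)"
proof -
  have "(\<Sum>m<n. (real m + 1) ^ (a - 1) * \<Theta> m) \<le> (\<Sum>m<n. (real m + 1) ^ (p - 1) * \<Theta> m)"
    using \<open>a \<le> p\<close> by (intro sum_mono mult_right_mono power_increasing \<Theta>0) auto
  also have "\<dots> \<le> (\<Sum>m. (real m + 1) ^ (p - 1) * \<Theta> m)"
    using \<Theta>0 by (intro sum_le_suminf[OF sum]) auto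
  finally show ?thesis .
qed

definition moment_poly :: "real \<Rightarrow> nat \<Rightarrow> nat \<Rightarrow> real" where
  "moment_poly c a n = (\<Sum>k\<in>{1..(a+1) div 2}. real n ^ (k-1) * c ^ k)"

lemma nat_ceiling_half: "nat \<lceil>real m / 2\<rceil> = (m+1) div 2"
proof (cases "even m")
  case True then show ?thesis by (auto elim: evenE)
next
  case False
  then obtain t where t: "m = 2*t+1" using oddE by blast
  have "\<lceil>real m / 2\<rceil> = int t + 1"
    unfolding t by (intro ceiling_unique) auto
  then show ?thesis using t by simp
qed

(* For a \<ge> 1 the term k = 1 already dominates c. *)
lemma moment_poly_ge: "0 \<le> c \<Longrightarrow> 1 \<le> a \<Longrightarrow> c \<le> moment_poly c a n"
  using member_le_sum[of 1 "{1..(a+1) div 2}" "\<lambda>k. real n ^ (k-1) * c ^ k"]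
  unfolding moment_poly_def by auto

(* The key algebraic property: n P_b P_d is dominated by P_(b+d+1), because
   \<lceil>(b+1)/2\<rceil> + \<lceil>(d+1)/2\<rceil> \<le> \<lceil>(b+d+2)/2\<rceil> bounds every exponent pair that occurs. *)
lemma moment_poly_mult:
  assumes c: "0 \<le> c" and abd: "b + d + 1 = a"
  shows "real n * moment_poly c b n * moment_poly c d n
           \<le> real (((b+1) div 2) * ((d+1) div 2)) * moment_poly c a n"
proof -
  have "real n * moment_poly c b n * moment_poly c d n
      = (\<Sum>k\<in>{1..(b+1) div 2}. \<Sum>l\<in>{1..(d+1) div 2}.
           real n * (real n ^ (k-1) * c ^ k) * (real n ^ (l-1) * c ^ l))"
    unfolding moment_poly_def by (simp add: sum_distrib_left sum_distrib_right mult_ac)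
  also have "\<dots> = (\<Sum>k\<in>{1..(b+1) div 2}. \<Sum>l\<in>{1..(d+1) div 2}. real n ^ ((k+l)-1) * c ^ (k+l))"
  proof (intro sum.cong refl)
    fix k l assume "k \<in> {1..(b+1) div 2}" "l \<in> {1..(d+1) div 2}"
    then have e: "k + l - 1 = 1 + (k-1) + (l-1)" by auto
    show "real n * (real n ^ (k-1) * c ^ k) * (real n ^ (l-1) * c ^ l) = real n ^ ((k+l)-1) * c ^ (k+l)"
      unfolding e power_add by (simp add: mult_ac)
  qed
  also have "\<dots> \<le> (\<Sum>k\<in>{1..(b+1) div 2}. \<Sum>l\<in>{1..(d+1) div 2}. moment_poly c a n)"
  proof (intro sum_mono)
    fix k l assume "k \<in> {1..(b+1) div 2}" "l \<in> {1..(d+1) div 2}"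
    then have "k + l \<in> {1..(a+1) div 2}" using abd by auto
    then show "real n ^ ((k+l)-1) * c ^ (k+l) \<le> moment_poly c a n"
      unfolding moment_poly_def using c by (intro member_le_sum) auto
  qed
  also have "\<dots> = real (((b+1) div 2) * ((d+1) div 2)) * moment_poly c a n" by simp
  finally show ?thesis .
qed

lemma moment_poly_product_bound:
  assumes c: "0 \<le> c" and abd: "b + d + 1 = a"
    and x: "0 \<le> x" "x \<le> K * moment_poly c b n" and y: "0 \<le> y" "y \<le> L * moment_poly c d n"
    and K: "0 \<le> K" and L: "0 \<le> L"
  shows "real n * x * y \<le> K * L * real (((b+1) div 2) * ((d+1) div 2)) * moment_poly c a n"
proof -
  have "x * y \<le> (K * moment_poly c b n) * (L * moment_poly c d n)"
    using x y by (intro mult_mono) auto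
  then have "real n * (x * y) \<le> real n * ((K * moment_poly c b n) * (L * moment_poly c d n))"
    by (rule mult_left_mono) simp
  then have "real n * x * y \<le> K * L * (real n * moment_poly c b n * moment_poly c d n)"
    by (simp add: mult_ac)
  also have "\<dots> \<le> K * L * (real (((b+1) div 2) * ((d+1) div 2)) * moment_poly c a n)"
    using moment_poly_mult[OF c abd] K L by (intro mult_left_mono mult_nonneg_nonneg) auto
  finally show ?thesis by (simp add: mult.assoc)
qed

lemma quadratic_recursion_bound:
  fixes B :: "'x \<Rightarrow> nat \<Rightarrow> nat \<Rightarrow> real" and c :: "'x \<Rightarrow> real" and D :: "nat \<Rightarrow> real"
  assumes c0: "\<And>x. P x \<Longrightarrow> 0 \<le> c x"
    and B0: "\<And>x a n. P x \<Longrightarrow> 0 \<le> B x a n"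
    and base: "\<And>x n. P x \<Longrightarrow> B x 0 n = 0"
    and step: "\<And>x a n. P x \<Longrightarrow> 1 \<le> n \<Longrightarrow> 1 \<le> a \<Longrightarrow> a \<le> p \<Longrightarrow>
                 B x a n \<le> D a * c x + (\<Sum>q\<in>{1..a}. real n * B x (q-1) n * B x (a-q) n)"
    and "a \<le> p"
  shows "\<exists>K\<ge>0. \<forall>x n. P x \<longrightarrow> 1 \<le> n \<longrightarrow> B x a n \<le> K * moment_poly (c x) a n"
  using \<open>a \<le> p\<close>
proof (induction a rule: less_induct)
  case (less a)
  show ?case
  proof (cases "a = 0")
    case True
    then show ?thesis using base by auto
  next
    case False
    then have a1: "1 \<le> a" by simp
    have "\<forall>b. \<exists>K. b < a \<longrightarrow> K \<ge> 0 \<and> (\<forall>x n. P x \<longrightarrow> 1 \<le> n \<longrightarrow> B x b n \<le> K * moment_poly (c x) b n)"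
      using less by (metis less_imp_le_nat order.trans)
    then obtain Kb where Kb0: "\<And>b. b < a \<Longrightarrow> 0 \<le> Kb b"
      and Kb: "\<And>b x n. b < a \<Longrightarrow> P x \<Longrightarrow> 1 \<le> n \<Longrightarrow> B x b n \<le> Kb b * moment_poly (c x) b n"
      by metis
    define w where "w q = Kb (q-1) * Kb (a-q) * real ((q div 2) * ((a-q+1) div 2))" for q
    define K where "K = \<bar>D a\<bar> + (\<Sum>q\<in>{1..a}. w q)"
    have w0: "0 \<le> w q" if "q \<in> {1..a}" for q
      using that Kb0 unfolding w_def by (intro mult_nonneg_nonneg) auto
    show ?thesis
    proof (intro exI[of _ K] conjI allI impI)
      show "0 \<le> K" unfolding K_def using w0 by (intro add_nonneg_nonneg sum_nonneg) auto
    next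
      fix x and n :: nat assume x: "P x" and n: "1 \<le> n"
      have product_term: "real n * B x (q-1) n * B x (a-q) n \<le> w q * moment_poly (c x) a n"
        if q: "q \<in> {1..a}" for q
      proof -
        have "real n * B x (q-1) n * B x (a-q) n
            \<le> Kb (q-1) * Kb (a-q) * real (((q-1+1) div 2) * ((a-q+1) div 2)) * moment_poly (c x) a n"
          using q x n B0 Kb Kb0 by (intro moment_poly_product_bound[OF c0[OF x]]) auto
        then show ?thesis unfolding w_def using q by simp
      qed
      have "D a * c x \<le> \<bar>D a\<bar> * moment_poly (c x) a n"
        using moment_poly_ge[OF c0[OF x] a1, of n] c0[OF x]
        by (meson abs_ge_self abs_ge_zero mult_mono order_trans)
      moreover have "(\<Sum>q\<in>{1..a}. real n * B x (q-1) n * B x (a-q) n)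
          \<le> (\<Sum>q\<in>{1..a}. w q * moment_poly (c x) a n)"
        by (rule sum_mono) (rule product_term)
      ultimately have "B x a n \<le> \<bar>D a\<bar> * moment_poly (c x) a n + (\<Sum>q\<in>{1..a}. w q * moment_poly (c x) a n)"
        using step[OF x n a1 less.prems] by linarith
      then show "B x a n \<le> K * moment_poly (c x) a n"
        unfolding K_def by (simp add: distrib_right sum_distrib_right)
    qed
  qed
qed

lemma istar_mono: "j \<le> j' \<Longrightarrow> istar i j \<le> istar i j'"
  unfolding istar_def by (intro sum_mono2) auto

lemma istar_tuple_prefix: "j \<le> q - 1 \<Longrightarrow> istar (tuple_prefix q i) j = istar i j"
  unfolding istar_def tuple_prefix_def by (intro sum.cong) auto

lemma istar_tuple_suffix:
  assumes "j \<le> a - q"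
  shows "istar i (q + j) = istar i q + istar (tuple_suffix a q i) j"
proof -
  have "istar i (q + j) = sum i {1..q} + sum i {1+q..j+q}"
    unfolding istar_def by (subst sum.ub_add_nat) (simp_all add: add.commute)
  also have "sum i {1+q..j+q} = (\<Sum>k\<in>{1..j}. i (k+q))" by (rule sum.shift_bounds_cl_nat_ivl)
  also have "\<dots> = istar (tuple_suffix a q i) j"
    unfolding istar_def tuple_suffix_def using assms by (intro sum.cong) (auto simp: add.commute)
  finally show ?thesis unfolding istar_def .
qed

lemma stationary_integral_prod_shift:
  fixes X :: "nat \<Rightarrow> 'w \<Rightarrow> 'e::euclidean_space" and f :: "'e \<Rightarrow> real"
  assumes st: "stationary M X" and X: "\<And>k. X k \<in> borel_measurable M"
    and f: "f \<in> borel_measurable borel" and s: "\<And>j. j \<le> m' \<Longrightarrow> s j \<le> m"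
  shows "(\<integral>\<omega>. (\<Prod>j\<in>{0..m'}. f (X (k + s j) \<omega>)) \<partial>M) = (\<integral>\<omega>. (\<Prod>j\<in>{0..m'}. f (X (s j) \<omega>)) \<partial>M)"
proof -
  define g where "g = (\<lambda>y::nat \<Rightarrow> 'e. \<Prod>j\<in>{0..m'}. f (y (s j)))"
  have g: "g \<in> borel_measurable (PiM {..m} (\<lambda>_. borel))"
    unfolding g_def
  proof (rule borel_measurable_prod)
    fix j assume "j \<in> {0..m'}"
    then have "s j \<in> {..m}" using s by auto
    then show "(\<lambda>y. f (y (s j))) \<in> borel_measurable (PiM {..m} (\<lambda>_. borel))"
      using measurable_compose[OF measurable_component_singleton[of "s j" "{..m}" "\<lambda>_. borel"] f] by simp
  qed
  have window: "(\<lambda>\<omega>. \<lambda>l\<in>{..m}. X (t + l) \<omega>) \<in> measurable M (PiM {..m} (\<lambda>_. borel))" for t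
    by (rule measurable_restrict) (use X in auto)
  have "(\<integral>\<omega>. g (\<lambda>l\<in>{..m}. X (k + l) \<omega>) \<partial>M)
      = (\<integral>y. g y \<partial>distr M (PiM {..m} (\<lambda>_. borel)) (\<lambda>\<omega>. \<lambda>l\<in>{..m}. X (k + l) \<omega>))"
    by (rule integral_distr[OF window g, symmetric])
  also have "\<dots> = (\<integral>y. g y \<partial>distr M (PiM {..m} (\<lambda>_. borel)) (\<lambda>\<omega>. \<lambda>l\<in>{..m}. X (0 + l) \<omega>))"
    using st unfolding stationary_def by simp
  also have "\<dots> = (\<integral>\<omega>. g (\<lambda>l\<in>{..m}. X (0 + l) \<omega>) \<partial>M)"
    by (rule integral_distr[OF window g])
  finally have shift_eq:
    "(\<integral>\<omega>. g (\<lambda>l\<in>{..m}. X (k + l) \<omega>) \<partial>M) = (\<integral>\<omega>. g (\<lambda>l\<in>{..m}. X (0 + l) \<omega>) \<partial>M)" .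
  have g_window: "g (\<lambda>l\<in>{..m}. X (t + l) \<omega>) = (\<Prod>j\<in>{0..m'}. f (X (t + s j) \<omega>))" for t \<omega>
    unfolding g_def using s by (intro prod.cong) auto
  from shift_eq show ?thesis unfolding g_window by simp
qed

definition tuple_moment :: "'w measure \<Rightarrow> (nat \<Rightarrow> 'w \<Rightarrow> 'e) \<Rightarrow> ('e \<Rightarrow> real) \<Rightarrow> nat \<Rightarrow> (nat \<Rightarrow> nat) \<Rightarrow> real" where
  "tuple_moment M X f a i = \<bar>\<integral>\<omega>. (\<Prod>j\<in>{0..a}. f (X (istar i j) \<omega>)) \<partial>M\<bar>"

definition cube_moment :: "'w measure \<Rightarrow> (nat \<Rightarrow> 'w \<Rightarrow> 'e) \<Rightarrow> ('e \<Rightarrow> real) \<Rightarrow> nat \<Rightarrow> nat \<Rightarrow> real" where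
  "cube_moment M X f a n = (\<Sum>i\<in>PiE {1..a} (\<lambda>_. {..<n}). tuple_moment M X f a i)"

lemma cube_moment_nonneg: "0 \<le> cube_moment M X f a n"
  unfolding cube_moment_def tuple_moment_def by (intro sum_nonneg) auto

lemma cube_moment_0:
  assumes "(\<integral>\<omega>. f (X 0 \<omega>) \<partial>M) = 0"
  shows "cube_moment M X f 0 n = 0"
  using assms by (simp add: cube_moment_def tuple_moment_def istar_def)

lemma prefix_block_moment:
  assumes "1 \<le> q"
  shows "\<bar>\<integral>\<omega>. (\<Prod>j\<in>{0..<q}. f (X (istar i j) \<omega>)) \<partial>M\<bar> = tuple_moment M X f (q-1) (tuple_prefix q i)"
proof -
  have "{0..<q} = {0..q-1}" using assms by auto
  then have "(\<Prod>j\<in>{0..<q}. f (X (istar i j) \<omega>)) = (\<Prod>j\<in>{0..q-1}. f (X (istar (tuple_prefix q i) j) \<omega>))" for \<omega>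
    by (auto intro!: prod.cong simp: istar_tuple_prefix)
  then show ?thesis unfolding tuple_moment_def by simp
qed

(* By stationarity the block of the last a-q+1 factors, shifted back by s_q, is the moment of
   the suffix tuple. *)
lemma suffix_block_moment:
  fixes X :: "nat \<Rightarrow> 'w \<Rightarrow> 'e::euclidean_space" and f :: "'e \<Rightarrow> real"
  assumes st: "stationary M X" and X: "\<And>k. X k \<in> borel_measurable M"
    and f: "f \<in> borel_measurable borel" and q: "q \<le> a"
  shows "\<bar>\<integral>\<omega>. (\<Prod>j\<in>{q..a}. f (X (istar i j) \<omega>)) \<partial>M\<bar> = tuple_moment M X f (a-q) (tuple_suffix a q i)"
proof -
  define i' where "i' = tuple_suffix a q i"
  have "(\<Prod>j\<in>{q..a}. f (X (istar i j) \<omega>)) = (\<Prod>j\<in>{0+q..(a-q)+q}. f (X (istar i j) \<omega>))" for \<omega>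
    using q by simp
  also have "\<dots> \<omega> = (\<Prod>j\<in>{0..a-q}. f (X (istar i (q+j)) \<omega>))" for \<omega>
    by (subst prod.shift_bounds_cl_nat_ivl) (simp add: add.commute)
  also have "\<dots> \<omega> = (\<Prod>j\<in>{0..a-q}. f (X (istar i q + istar i' j) \<omega>))" for \<omega>
    unfolding i'_def by (intro prod.cong refl) (auto simp: istar_tuple_suffix)
  finally have "(\<integral>\<omega>. (\<Prod>j\<in>{q..a}. f (X (istar i j) \<omega>)) \<partial>M)
      = (\<integral>\<omega>. (\<Prod>j\<in>{0..a-q}. f (X (istar i q + istar i' j) \<omega>)) \<partial>M)" by simp
  also have "\<dots> = (\<integral>\<omega>. (\<Prod>j\<in>{0..a-q}. f (X (istar i' j) \<omega>)) \<partial>M)"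
    by (rule stationary_integral_prod_shift[OF st X f, where m = "istar i' (a-q)"]) (rule istar_mono)
  finally show ?thesis unfolding tuple_moment_def i'_def by simp
qed

(* One step of the argument for a single tuple: split the product at a position q carrying the
   largest gap, write E(AB) = Cov(A,B) + E A E B, bound the covariance by mixing and the
   product of expectations by the moments of the prefix and suffix tuples. *)
lemma tuple_moment_split:
  fixes X :: "nat \<Rightarrow> 'w \<Rightarrow> 'e::euclidean_space" and f :: "'e \<Rightarrow> real"
  assumes st: "stationary M X" and X: "\<And>k. X k \<in> borel_measurable M"
    and f: "f \<in> borel_measurable borel" and a: "1 \<le> a"
    and cv: "\<And>q. q \<in> {1..a} \<Longrightarrow>
      \<bar>cov M (\<lambda>\<omega>. \<Prod>j\<in>{0..<q}. f (X (istar i j) \<omega>)) (\<lambda>\<omega>. \<Prod>j\<in>{q..a}. f (X (istar i j) \<omega>))\<bar>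
        \<le> \<kappa> * \<Theta> (i q)"
  shows "tuple_moment M X f a i \<le> \<kappa> * \<Theta> (Max (i ` {1..a}))
     + (\<Sum>q\<in>{1..a}. tuple_moment M X f (q-1) (tuple_prefix q i) * tuple_moment M X f (a-q) (tuple_suffix a q i))"
proof -
  have "Max (i ` {1..a}) \<in> i ` {1..a}" using a by (intro Max_in) auto
  then obtain q where q: "q \<in> {1..a}" and iq: "i q = Max (i ` {1..a})" by auto
  define A where "A = (\<lambda>\<omega>. \<Prod>j\<in>{0..<q}. f (X (istar i j) \<omega>))"
  define B where "B = (\<lambda>\<omega>. \<Prod>j\<in>{q..a}. f (X (istar i j) \<omega>))"
  have AB: "(\<Prod>j\<in>{0..a}. f (X (istar i j) \<omega>)) = A \<omega> * B \<omega>" for \<omega>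
  proof -
    have "{0..a} = {0..<Suc a}" "{q..a} = {q..<Suc a}" by auto
    then show ?thesis
      unfolding A_def B_def using q by (simp add: prod.atLeastLessThan_concat)
  qed
  have "tuple_moment M X f a i = \<bar>cov M A B + (\<integral>\<omega>. A \<omega> \<partial>M) * (\<integral>\<omega>. B \<omega> \<partial>M)\<bar>"
    unfolding tuple_moment_def cov_def AB by simp
  also have "\<dots> \<le> \<bar>cov M A B\<bar> + \<bar>\<integral>\<omega>. A \<omega> \<partial>M\<bar> * \<bar>\<integral>\<omega>. B \<omega> \<partial>M\<bar>"
    by (metis abs_mult abs_triangle_ineq)
  also have "\<dots> = \<bar>cov M A B\<bar> + tuple_moment M X f (q-1) (tuple_prefix q i) * tuple_moment M X f (a-q) (tuple_suffix a q i)"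
    unfolding A_def B_def using q by (simp add: prefix_block_moment suffix_block_moment[OF st X f])
  also have "\<dots> \<le> \<kappa> * \<Theta> (Max (i ` {1..a}))
     + (\<Sum>q\<in>{1..a}. tuple_moment M X f (q-1) (tuple_prefix q i) * tuple_moment M X f (a-q) (tuple_suffix a q i))"
    using cv[OF q] q unfolding A_def B_def iq
    by (intro add_mono member_le_sum) (auto simp: tuple_moment_def)
  finally show ?thesis .
qed

(* Summing the one-step bound over the cube: the product terms factorise (sum_PiE_split), and
   the covariance terms are controlled by the weighted sum of \<Theta>. *)
lemma cube_moment_recursion:
  fixes X :: "nat \<Rightarrow> 'w \<Rightarrow> 'e::euclidean_space" and f :: "'e \<Rightarrow> real" and \<Theta> :: "nat \<Rightarrow> real"
  assumes st: "stationary M X" and X: "\<And>k. X k \<in> borel_measurable M"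
    and f: "f \<in> borel_measurable borel" and a: "1 \<le> a"
    and \<kappa>: "0 \<le> \<kappa>" and \<Theta>0: "\<And>k. 0 \<le> \<Theta> k"
    and cv: "\<And>i q. q \<in> {1..a} \<Longrightarrow>
      \<bar>cov M (\<lambda>\<omega>. \<Prod>j\<in>{0..<q}. f (X (istar i j) \<omega>)) (\<lambda>\<omega>. \<Prod>j\<in>{q..a}. f (X (istar i j) \<omega>))\<bar>
        \<le> \<kappa> * \<Theta> (i q)"
  shows "cube_moment M X f a n \<le> \<kappa> * (real a * (\<Sum>m<n. (real m + 1)^(a-1) * \<Theta> m))
     + (\<Sum>q\<in>{1..a}. real n * cube_moment M X f (q-1) n * cube_moment M X f (a-q) n)"
proof -
  define cube where "cube = PiE {1..a} (\<lambda>_. {..<n})"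
  have "cube_moment M X f a n \<le> (\<Sum>i\<in>cube. \<kappa> * \<Theta> (Max (i ` {1..a}))
     + (\<Sum>q\<in>{1..a}. tuple_moment M X f (q-1) (tuple_prefix q i) * tuple_moment M X f (a-q) (tuple_suffix a q i)))"
    unfolding cube_moment_def cube_def using cv by (intro sum_mono tuple_moment_split[OF st X f a])
  also have "\<dots> = \<kappa> * (\<Sum>i\<in>cube. \<Theta> (Max (i ` {1..a})))
     + (\<Sum>q\<in>{1..a}. \<Sum>i\<in>cube. tuple_moment M X f (q-1) (tuple_prefix q i) * tuple_moment M X f (a-q) (tuple_suffix a q i))"
    by (simp add: sum.distrib sum_distrib_left sum.swap[of _ cube])
  also have "\<dots> = \<kappa> * (\<Sum>i\<in>cube. \<Theta> (Max (i ` {1..a})))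
     + (\<Sum>q\<in>{1..a}. real n * cube_moment M X f (q-1) n * cube_moment M X f (a-q) n)"
    unfolding cube_def cube_moment_def
  proof (intro arg_cong2[where f = "(+)"] refl sum.cong)
    fix q assume "q \<in> {1..a}"
    then show "(\<Sum>i\<in>PiE {1..a} (\<lambda>_. {..<n}). tuple_moment M X f (q-1) (tuple_prefix q i) * tuple_moment M X f (a-q) (tuple_suffix a q i))
      = real n * (\<Sum>i\<in>PiE {1..q-1} (\<lambda>_. {..<n}). tuple_moment M X f (q-1) i)
               * (\<Sum>i\<in>PiE {1..a-q} (\<lambda>_. {..<n}). tuple_moment M X f (a-q) i)"
      using sum_PiE_split[where g = "tuple_moment M X f (q-1)" and h = "tuple_moment M X f (a-q)"
          and N = "{..<n}" and q = q and a = a] by simp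
  qed
  also have "\<dots> \<le> \<kappa> * (real a * (\<Sum>m<n. (real m + 1)^(a-1) * \<Theta> m))
     + (\<Sum>q\<in>{1..a}. real n * cube_moment M X f (q-1) n * cube_moment M X f (a-q) n)"
    unfolding cube_def using sum_PiE_max_bound[OF a \<Theta>0] \<kappa> by (intro add_mono mult_left_mono) auto
  finally show ?thesis .
qed

lemma Lr_norm_nonneg: "0 \<le> Lr_norm M r Y"
  unfolding Lr_norm_def by simp

lemma mixing_cube_recursion:
  fixes X :: "nat \<Rightarrow> 'w \<Rightarrow> 'e::euclidean_space" and \<Theta> :: "nat \<Rightarrow> real"
  assumes X: "\<And>k. X k \<in> borel_measurable M" and G: "G \<subseteq> borel_measurable borel"
    and normG: "\<And>f. f \<in> G \<Longrightarrow> 0 \<le> normG f" and st: "stationary M X"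
    and mix: "multiple_mixing M X G normG \<Theta> r"
    and summ: "summable (\<lambda>m. (real m + 1) ^ (p - 1) * \<Theta> m)"
  shows "\<exists>D. \<forall>f a n. admissible M X G f \<longrightarrow> 1 \<le> a \<longrightarrow> a \<le> p \<longrightarrow>
           cube_moment M X f a n \<le> D a * (Lr_norm M r (\<lambda>\<omega>. f (X 0 \<omega>)) * normG f)
             + (\<Sum>q\<in>{1..a}. real n * cube_moment M X f (q-1) n * cube_moment M X f (a-q) n)"
proof -
  define c where "c f = Lr_norm M r (\<lambda>\<omega>. f (X 0 \<omega>)) * normG f" for f
  define C where "C = (\<Sum>m. (real m + 1) ^ (p - 1) * \<Theta> m)"
  have \<Theta>0: "\<And>k. 0 \<le> \<Theta> k" using mix unfolding multiple_mixing_def by auto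
  have "\<forall>a. \<exists>K. 1 \<le> a \<longrightarrow> (\<forall>f i q. admissible M X G f \<longrightarrow> q \<in> {1..a} \<longrightarrow>
      \<bar>cov M (\<lambda>\<omega>. \<Prod>j\<in>{0..<q}. f (X (istar i j) \<omega>)) (\<lambda>\<omega>. \<Prod>j\<in>{q..a}. f (X (istar i j) \<omega>))\<bar>
        \<le> K * Lr_norm M r (\<lambda>\<omega>. f (X 0 \<omega>)) * normG f * \<Theta> (i q))"
    using mix unfolding multiple_mixing_def by blast
  from choice[OF this] obtain Kmix where "\<forall>a. 1 \<le> a \<longrightarrow> (\<forall>f i q. admissible M X G f \<longrightarrow> q \<in> {1..a} \<longrightarrow>
      \<bar>cov M (\<lambda>\<omega>. \<Prod>j\<in>{0..<q}. f (X (istar i j) \<omega>)) (\<lambda>\<omega>. \<Prod>j\<in>{q..a}. f (X (istar i j) \<omega>))\<bar>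
        \<le> Kmix a * Lr_norm M r (\<lambda>\<omega>. f (X 0 \<omega>)) * normG f * \<Theta> (i q))"
    by blast
  then have Kmix: "\<And>a f i q. 1 \<le> a \<Longrightarrow> admissible M X G f \<Longrightarrow> q \<in> {1..a} \<Longrightarrow>
      \<bar>cov M (\<lambda>\<omega>. \<Prod>j\<in>{0..<q}. f (X (istar i j) \<omega>)) (\<lambda>\<omega>. \<Prod>j\<in>{q..a}. f (X (istar i j) \<omega>))\<bar>
        \<le> Kmix a * c f * \<Theta> (i q)"
    unfolding c_def by (simp add: mult.assoc)
  have "cube_moment M X f a n \<le> (\<bar>Kmix a\<bar> * real a * C) * c f
       + (\<Sum>q\<in>{1..a}. real n * cube_moment M X f (q-1) n * cube_moment M X f (a-q) n)"
    if f: "admissible M X G f" and a: "1 \<le> a" "a \<le> p" for f a n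
  proof -
    have c0: "0 \<le> c f"
      using f normG unfolding c_def admissible_def by (intro mult_nonneg_nonneg Lr_norm_nonneg) auto
    have fm: "f \<in> borel_measurable borel" using f G unfolding admissible_def by auto
    have cv: "\<bar>cov M (\<lambda>\<omega>. \<Prod>j\<in>{0..<q}. f (X (istar i j) \<omega>)) (\<lambda>\<omega>. \<Prod>j\<in>{q..a}. f (X (istar i j) \<omega>))\<bar>
        \<le> (\<bar>Kmix a\<bar> * c f) * \<Theta> (i q)" if "q \<in> {1..a}" for i q
    proof -
      have "Kmix a * (c f * \<Theta> (i q)) \<le> \<bar>Kmix a\<bar> * (c f * \<Theta> (i q))"
        using c0 \<Theta>0[of "i q"] by (intro mult_right_mono) auto
      then show ?thesis using Kmix[OF a(1) f that, of i] by (simp add: mult.assoc)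
    qed
    have "(\<bar>Kmix a\<bar> * c f) * (real a * (\<Sum>m<n. (real m + 1)^(a-1) * \<Theta> m))
        \<le> (\<bar>Kmix a\<bar> * c f) * (real a * C)"
      unfolding C_def using partial_weight_le_suminf[OF \<Theta>0 summ a(2)] c0
      by (intro mult_left_mono) auto
    then show ?thesis
      using cube_moment_recursion[OF st X fm a(1) _ \<Theta>0 cv, of n] c0 by (simp add: mult_ac)
  qed
  then show ?thesis unfolding c_def by (intro exI[of _ "\<lambda>a. \<bar>Kmix a\<bar> * real a * C"]) auto
qed

lemma I_sum_le_cube_moment: "I_sum M X f n p \<le> cube_moment M X f p n"
  unfolding I_sum_def cube_moment_def tuple_moment_def by (rule sum_mono2) (auto simp: finite_PiE)

theorem lemma6:
  fixes M :: "'w measure" and X :: "nat \<Rightarrow> 'w \<Rightarrow> 'e::euclidean_space"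
    and G :: "('e \<Rightarrow> real) set" and normG :: "('e \<Rightarrow> real) \<Rightarrow> real"
    and \<Theta> :: "nat \<Rightarrow> real" and r :: real and p :: nat
  assumes "prob_space M"
    and "\<And>k. X k \<in> borel_measurable M"
    and "G \<subseteq> borel_measurable borel"
    and "\<And>f. f \<in> G \<Longrightarrow> 0 \<le> normG f"
    and "stationary M X"
    and "multiple_mixing M X G normG \<Theta> r"
    and "1 \<le> p"
    and "summable (\<lambda>i. real i ^ (p - 1) * \<Theta> i)"
  shows "\<exists>K::real. \<forall>n f. 1 \<le> n \<longrightarrow> admissible M X G f \<longrightarrow>
           I_sum M X f n p \<le> K * (\<Sum>i\<in>{1..nat \<lceil>real p / 2\<rceil>}.
              real n ^ (i - 1) * Lr_norm M r (\<lambda>\<omega>. f (X 0 \<omega>)) ^ i * normG f ^ i)"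
proof -
  define c where "c f = Lr_norm M r (\<lambda>\<omega>. f (X 0 \<omega>)) * normG f" for f
  have "\<And>k. 0 \<le> \<Theta> k" using assms(6) unfolding multiple_mixing_def by auto
  then have "summable (\<lambda>m. (real m + 1) ^ (p - 1) * \<Theta> m)"
    using assms(8) by (rule summable_shifted_power_weight)
  then obtain D where D: "\<And>f a n. admissible M X G f \<Longrightarrow> 1 \<le> a \<Longrightarrow> a \<le> p \<Longrightarrow>
      cube_moment M X f a n \<le> D a * c f
        + (\<Sum>q\<in>{1..a}. real n * cube_moment M X f (q-1) n * cube_moment M X f (a-q) n)"
    using mixing_cube_recursion[OF assms(2-6)] unfolding c_def by blast
  have c0: "0 \<le> c f" if "admissible M X G f" for f
    using that assms(4) unfolding c_def admissible_def by (intro mult_nonneg_nonneg Lr_norm_nonneg) auto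
  have base: "cube_moment M X f 0 n = 0" if "admissible M X G f" for f n
    using that unfolding admissible_def by (intro cube_moment_0) auto
  have "\<exists>K\<ge>0. \<forall>f n. admissible M X G f \<longrightarrow> 1 \<le> n \<longrightarrow> cube_moment M X f p n \<le> K * moment_poly (c f) p n"
    by (rule quadratic_recursion_bound[where B = "\<lambda>f. cube_moment M X f" and P = "admissible M X G",
        OF c0 cube_moment_nonneg base D order.refl])
  then obtain K where K: "\<And>f n. admissible M X G f \<Longrightarrow> 1 \<le> n \<Longrightarrow>
      cube_moment M X f p n \<le> K * moment_poly (c f) p n"
    by blast
  have "moment_poly (c f) p n = (\<Sum>i\<in>{1..nat \<lceil>real p / 2\<rceil>}.
      real n ^ (i - 1) * Lr_norm M r (\<lambda>\<omega>. f (X 0 \<omega>)) ^ i * normG f ^ i)" for f n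
    unfolding moment_poly_def nat_ceiling_half c_def by (simp add: power_mult_distrib mult.assoc)
  then show ?thesis
    using order.trans[OF I_sum_le_cube_moment K] by (intro exI[of _ K]) auto
qed

end
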